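(* Let $A\in\mathbb{R}^{m\times n}$, let $A^\dagger\in\mathbb{R}^{n\times m}$ be its Moore–Penrose pseudoinverse, and let $\|\cdot\|$ denote the Frobenius norm. (i) The problem $\min_{X\in\mathbb{R}^{n\times m}} \tfrac12\|X\|^2$ subject to $A^\top = A^\top A X$ is equivalent to (has the same $X$-solution as) the problem $\min_{X,\Gamma}\tfrac12\|X-A^\dagger\|^2$ subject to $X = A^\top A\Gamma$. (ii) For any $X_k\in\mathbb{R}^{n\times m}$ and any $S\in\mathbb{R}^{m\times\tau}$ ($\tau$ any positive integer), the problem $$X_{k+1} = \arg\min_X \tfrac12\|X-X_k\|^2 \quad\text{subject to}\quad S^\top A^\top = S^\top A^\top A X$$ is equivalent to (has the same $X$-solution as) the problem $\min_{X,\Gamma}\tfrac12\|X-A^\dagger\|^2$ subject to $X = X_k + A^\top A S\Gamma$. (iii) The solution of the problem in (ii) is given explicitly by $$X_{k+1} = X_k - A^\top A S\,(S^\top A^\top A A^\top A S)^\dagger S^\top A^\top (A X_k - I).$$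
   Context: For a real matrix $M$, $M^\dagger$ denotes its Moore–Penrose pseudoinverse. The Frobenius inner product is $\langle X,Y\rangle=\mathrm{Tr}(X^\top Y)$ and $\|X\|=\sqrt{\mathrm{Tr}(X^\top X)}$. *)

theory Defs
  imports "HOL-Analysis.Analysis"
begin

definition frob_norm :: "real^'n^'m \<Rightarrow> real" where
  "frob_norm X = sqrt (trace (transpose X ** X))"

definition is_mp_pinv :: "real^'n^'m \<Rightarrow> real^'m^'n \<Rightarrow> bool" where
  "is_mp_pinv A X \<longleftrightarrow> A ** X ** A = A \<and> X ** A ** X = X \<and>
     transpose (A ** X) = A ** X \<and> transpose (X ** A) = X ** A"

definition pinv :: "real^'n^'m \<Rightarrow> real^'m^'n" where
  "pinv A = (THE X. is_mp_pinv A X)"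

end

theory Submission
  imports Defs
begin

(*
  Each problem minimises a squared distance to a centre over an affine set, and a point of the
  set is its unique minimiser once its displacement from the centre is orthogonal to the set
  (Pythagoras).  For a matrix M the affine sets {X. M\<^sup>T X = M\<^sup>T B} and C + range M meet
  orthogonally, so a point lying in both minimises the distance to C over the first and the
  distance to B over the second.  Take B = A\<^sup>\<dagger>, which satisfies A\<^sup>T A A\<^sup>\<dagger> = A\<^sup>T and lies in
  range (A\<^sup>T A).  For (i), M = A\<^sup>T A and A\<^sup>\<dagger> itself lies in both sets.  For (ii) and (iii),
  M = A\<^sup>T A S and the common point is X\<^sub>k + M (M\<^sup>T M)\<^sup>\<dagger> M\<^sup>T (A\<^sup>\<dagger> - X\<^sub>k), because M (M\<^sup>T M)\<^sup>\<dagger> M\<^sup>T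
  is the orthogonal projection onto range M.  The pseudoinverse exists since the normal
  equations A\<^sup>T A G = A\<^sup>T are solvable.
*)

lemma frob_norm_eq_norm: "frob_norm (X::real^'n^'m) = norm X"
proof -
  have "trace (transpose X ** X) = X \<bullet> X"
    unfolding trace_def inner_vec_def matrix_matrix_mult_def transpose_def
    by simp (subst sum.swap, simp)
  then show ?thesis by (simp add: frob_norm_def norm_eq_sqrt_inner)
qed

lemma inner_matrix_mult_transpose:
  "((B::real^'k^'m) ** (X::real^'n^'k)) \<bullet> Y = X \<bullet> (transpose B ** Y)"
proof -
  have "(B ** X) \<bullet> Y = (\<Sum>i\<in>UNIV. \<Sum>k\<in>UNIV. \<Sum>j\<in>UNIV. B$i$j * X$j$k * Y$i$k)"
    unfolding inner_vec_def matrix_matrix_mult_def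
    by (simp add: sum_distrib_right)
  also have "\<dots> = (\<Sum>i\<in>UNIV. \<Sum>j\<in>UNIV. \<Sum>k\<in>UNIV. B$i$j * X$j$k * Y$i$k)"
    by (rule sum.cong[OF refl], rule sum.swap)
  also have "\<dots> = (\<Sum>j\<in>UNIV. \<Sum>i\<in>UNIV. \<Sum>k\<in>UNIV. B$i$j * X$j$k * Y$i$k)"
    by (rule sum.swap)
  also have "\<dots> = (\<Sum>j\<in>UNIV. \<Sum>k\<in>UNIV. \<Sum>i\<in>UNIV. B$i$j * X$j$k * Y$i$k)"
    by (rule sum.cong[OF refl], rule sum.swap)
  also have "\<dots> = X \<bullet> (transpose B ** Y)"
    unfolding inner_vec_def matrix_matrix_mult_def transpose_def
    by (simp add: sum_distrib_left mult_ac)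
  finally show ?thesis .
qed

lemma matrix_diff_ldistrib: "(A::'a::ring_1^'k^'m) ** (B - C) = A ** B - A ** C"
  by (simp add: vec_eq_iff matrix_matrix_mult_def sum_subtractf algebra_simps)

lemma linear_matrix_mult_left: "linear (\<lambda>X. (A::real^'k^'m) ** X)"
  by (rule linearI) (simp_all add: matrix_add_ldistrib matrix_scalar_ac scalar_matrix_assoc)

lemma gram_mult_eq_0_imp_mult_eq_0:
  fixes M :: "real^'k^'n" and Z :: "real^'m^'k"
  assumes "transpose M ** M ** Z = 0"
  shows "M ** Z = 0"
proof -
  have "(M ** Z) \<bullet> (M ** Z) = Z \<bullet> (transpose M ** M ** Z)"
    by (simp add: inner_matrix_mult_transpose matrix_mul_assoc)
  then show ?thesis using assms by simp
qed

lemma normal_equation_solvable: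
  fixes A :: "real^'n^'m"
  obtains G :: "real^'m^'n" where "transpose A ** A ** G = transpose A"
proof -
  let ?R = "range (\<lambda>G :: real^'m^'n. transpose A ** A ** G)"
  have "subspace ?R"
    using linear_matrix_mult_left linear_subspace_image subspace_UNIV by blast
  obtain P Z where P: "P \<in> span ?R" and Z: "\<And>W. W \<in> span ?R \<Longrightarrow> orthogonal Z W"
    and decomp: "transpose A = P + Z"
    using orthogonal_subspace_decomp_exists by blast
  from P \<open>subspace ?R\<close> have "P \<in> ?R"
    by (metis span_eq_iff)
  then obtain G where G: "P = transpose A ** A ** G"
    by blast
  have Z_eq: "Z = transpose A ** (mat 1 - A ** G)"
    using decomp G by (simp add: matrix_diff_ldistrib matrix_mul_assoc algebra_simps)
  have "Z \<bullet> (transpose A ** A ** Z) = 0"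
    using Z[of "transpose A ** A ** Z"] by (auto simp: orthogonal_def intro: span_base)
  then have "(A ** Z) \<bullet> (A ** Z) = 0"
    by (simp add: inner_matrix_mult_transpose inner_commute matrix_mul_assoc)
  then have "A ** Z = 0"
    by simp
  then have "Z \<bullet> Z = 0"
    using inner_matrix_mult_transpose[of "transpose A" "mat 1 - A ** G" Z]
    by (simp only: Z_eq[symmetric] transpose_transpose inner_zero_right)
  then have "Z = 0"
    by simp
  then show ?thesis
    using that decomp G by (metis add.right_neutral)
qed

lemma normal_equation_projection:
  fixes A :: "real^'n^'m"
  assumes G: "transpose A ** A ** G = transpose A"
  shows "transpose (A ** G) = A ** G" and "A ** G ** A = A"
proof -
  have GT: "transpose G ** transpose A ** A = A"
    using arg_cong[OF G, of transpose] by (simp add: matrix_transpose_mul matrix_mul_assoc)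
  have "A ** G = transpose G ** transpose A ** A ** G"
    using GT by simp
  also have "\<dots> = transpose (A ** G) ** (A ** G)"
    by (simp add: matrix_transpose_mul matrix_mul_assoc)
  finally have "A ** G = transpose (A ** G) ** (A ** G)" .
  then show sym: "transpose (A ** G) = A ** G"
    by (metis matrix_transpose_mul transpose_transpose)
  show "A ** G ** A = A"
    using GT sym by (simp add: matrix_transpose_mul)
qed

lemma is_mp_pinv_exists:
  fixes A :: "real^'n^'m"
  shows "\<exists>X. is_mp_pinv A X"
proof -
  obtain G :: "real^'m^'n" where G: "transpose A ** A ** G = transpose A"
    using normal_equation_solvable by blast
  obtain H :: "real^'n^'m" where H: "A ** transpose A ** H = A"
    using normal_equation_solvable[of "transpose A"] by auto
  define Q where "Q = transpose A ** H"
  have Q_sym: "transpose Q = Q" and QA: "Q ** transpose A = transpose A"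
    using normal_equation_projection[of "transpose A" H] H by (simp_all add: Q_def)
  have AQ: "A ** Q = A"
    using arg_cong[OF QA, of transpose] Q_sym by (simp add: matrix_transpose_mul)
  define X where "X = Q ** G"
  have AX: "A ** X = A ** G"
    by (simp add: X_def matrix_mul_assoc AQ)
  have D: "X ** A - Q = transpose A ** (H ** G ** A - H)"
    by (simp add: X_def Q_def matrix_diff_ldistrib matrix_mul_assoc)
  have "A ** (X ** A - Q) = 0"
    using normal_equation_projection(2)[OF G]
    by (simp add: matrix_diff_ldistrib matrix_mul_assoc AX AQ)
  then have "A ** transpose A ** (H ** G ** A - H) = 0"
    by (simp only: D matrix_mul_assoc)
  then have "X ** A - Q = 0"
    unfolding D by (rule gram_mult_eq_0_imp_mult_eq_0[of "transpose A", unfolded transpose_transpose])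
  then have XA: "X ** A = Q"
    by simp
  have "Q ** Q = Q"
    using QA by (simp add: Q_def matrix_mul_assoc)
  then have "X ** A ** X = X"
    unfolding XA by (simp add: X_def matrix_mul_assoc)
  then have "is_mp_pinv A X"
    unfolding is_mp_pinv_def using AX XA Q_sym normal_equation_projection[OF G] by simp
  then show ?thesis ..
qed

lemma is_mp_pinv_unique:
  assumes X: "is_mp_pinv (A::real^'n^'m) X" and Y: "is_mp_pinv A Y"
  shows "X = Y"
proof -
  from X have x1: "A ** X ** A = A" and x2: "X ** A ** X = X"
    and x3: "transpose (A ** X) = A ** X" and x4: "transpose (X ** A) = X ** A"
    by (auto simp: is_mp_pinv_def)
  from Y have y1: "A ** Y ** A = A" and y2: "Y ** A ** Y = Y"
    and y3: "transpose (A ** Y) = A ** Y" and y4: "transpose (Y ** A) = Y ** A"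
    by (auto simp: is_mp_pinv_def)
  have "X = X ** transpose (A ** X)"
    using x2 x3 by (simp add: matrix_mul_assoc)
  also have "\<dots> = X ** transpose X ** transpose (A ** Y ** A)"
    using y1 by (simp add: matrix_transpose_mul matrix_mul_assoc)
  also have "\<dots> = X ** transpose (A ** X) ** transpose (A ** Y)"
    by (simp add: matrix_transpose_mul matrix_mul_assoc)
  also have "\<dots> = X ** A ** Y"
    using x2 x3 y3 by (simp add: matrix_mul_assoc)
  also have "\<dots> = X ** A ** (Y ** A ** Y)"
    using y2 by simp
  also have "\<dots> = transpose (X ** A) ** transpose (Y ** A) ** Y"
    using x4 y4 by (simp add: matrix_mul_assoc)
  also have "\<dots> = transpose (A ** X ** A) ** transpose Y ** Y"
    by (simp add: matrix_transpose_mul matrix_mul_assoc)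
  also have "\<dots> = Y"
    using x1 y2 y4 by (simp add: matrix_transpose_mul)
  finally show ?thesis .
qed

lemma pinv_is_mp_pinv: "is_mp_pinv (A::real^'n^'m) (pinv A)"
  unfolding pinv_def by (rule theI') (use is_mp_pinv_exists is_mp_pinv_unique in blast)

lemma is_mp_pinv_transpose:
  assumes "is_mp_pinv A X"
  shows "is_mp_pinv (transpose A) (transpose X)"
proof -
  have transpose3: "transpose (B ** C ** D) = transpose D ** transpose C ** transpose B"
    for B :: "real^'k^'l" and C :: "real^'j^'k" and D :: "real^'i^'j"
    by (simp add: matrix_transpose_mul matrix_mul_assoc)
  show ?thesis
    using assms unfolding is_mp_pinv_def
    by (metis transpose3 matrix_transpose_mul transpose_transpose)
qed

lemma pinv_transpose: "pinv (transpose (A::real^'n^'m)) = transpose (pinv A)"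
  by (rule is_mp_pinv_unique[OF pinv_is_mp_pinv is_mp_pinv_transpose[OF pinv_is_mp_pinv]])

lemma pinv_normal_equation: "transpose A ** A ** pinv A = transpose (A::real^'n^'m)"
proof -
  from pinv_is_mp_pinv[of A] have "A ** pinv A ** A = A"
    and sym: "transpose (A ** pinv A) = A ** pinv A"
    by (auto simp: is_mp_pinv_def)
  have "transpose A ** A ** pinv A = transpose A ** transpose (A ** pinv A)"
    using sym by (simp add: matrix_mul_assoc)
  also have "\<dots> = transpose (A ** pinv A ** A)"
    by (simp add: matrix_transpose_mul)
  finally show ?thesis
    using \<open>A ** pinv A ** A = A\<close> by simp
qed

lemma pinv_in_range_gram: "\<exists>G. pinv A = transpose A ** A ** G" for A :: "real^'n^'m"
proof
  have "pinv A = transpose (pinv A ** A) ** pinv A"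
    using pinv_is_mp_pinv[of A] by (simp add: is_mp_pinv_def)
  also have "\<dots> = transpose A ** (transpose (pinv A) ** pinv A)"
    by (simp add: matrix_transpose_mul matrix_mul_assoc)
  also have "\<dots> = transpose A ** A ** pinv A ** (transpose (pinv A) ** pinv A)"
    by (simp add: pinv_normal_equation)
  finally show "pinv A = transpose A ** A ** (pinv A ** transpose (pinv A) ** pinv A)"
    by (simp add: matrix_mul_assoc)
qed

lemma gram_pinv_transpose:
  fixes M :: "real^'k^'n"
  shows "transpose M ** M ** pinv (transpose M ** M) ** transpose M = transpose M"
proof -
  define N where "N = transpose M ** M"
  define K where "K = pinv N"
  have N_sym: "transpose N = N"
    by (simp add: N_def matrix_transpose_mul)
  have K_sym: "transpose K = K"
    using pinv_transpose[of N] N_sym by (metis K_def)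
  have "N ** K ** N = N"
    using pinv_is_mp_pinv[of N] by (simp add: K_def is_mp_pinv_def)
  then have "transpose M ** M ** (K ** N - mat 1) = 0"
    by (simp add: N_def matrix_diff_ldistrib matrix_mul_assoc)
  then have "M ** (K ** N - mat 1) = 0"
    by (rule gram_mult_eq_0_imp_mult_eq_0)
  then have "M ** K ** N = M"
    by (simp add: matrix_diff_ldistrib matrix_mul_assoc)
  then have "transpose (M ** K ** N) = transpose M"
    by simp
  then show ?thesis
    using N_sym K_sym by (simp add: N_def K_def matrix_transpose_mul matrix_mul_assoc)
qed

lemma gram_projection_solves_constraint:
  fixes M :: "real^'k^'n" and B C :: "real^'m^'n"
  shows "transpose M ** (C + M ** (pinv (transpose M ** M) ** transpose M ** (B - C)))
    = transpose M ** B"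
  using gram_pinv_transpose[of M]
  by (simp add: matrix_add_ldistrib matrix_diff_ldistrib matrix_mul_assoc)

lemma half_sq_dist_argmin_eq:
  fixes Xopt C :: "'a::real_inner"
  assumes "P Xopt" and orth: "\<And>Y. P Y \<Longrightarrow> (Xopt - C) \<bullet> (Y - Xopt) = 0"
  shows "{X. P X \<and> (\<forall>Y. P Y \<longrightarrow> (1/2) * (norm (X - C))^2 \<le> (1/2) * (norm (Y - C))^2)}
    = {Xopt}"
proof -
  have pythagoras: "(norm (Y - C))^2 = (norm (Xopt - C))^2 + (norm (Y - Xopt))^2" if "P Y" for Y
    using norm_add_Pythagorean[of "Xopt - C" "Y - Xopt"] orth[OF that]
    by (simp add: orthogonal_def)
  show ?thesis
  proof (intro equalityI subsetI)
    fix X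
    assume "X \<in> {X. P X \<and> (\<forall>Y. P Y \<longrightarrow> (1/2) * (norm (X - C))^2 \<le> (1/2) * (norm (Y - C))^2)}"
    then have "P X" and "(norm (X - C))^2 \<le> (norm (Xopt - C))^2"
      using \<open>P Xopt\<close> by auto
    then have "(norm (X - Xopt))^2 \<le> 0"
      using pythagoras[of X] by simp
    then show "X \<in> {Xopt}"
      by simp
  next
    fix X
    assume "X \<in> {Xopt}"
    moreover have "(norm (Xopt - C))^2 \<le> (norm (Y - C))^2" if "P Y" for Y
      unfolding pythagoras[OF that] by simp
    ultimately show "X \<in> {X. P X \<and> (\<forall>Y. P Y \<longrightarrow> (1/2) * (norm (X - C))^2 \<le> (1/2) * (norm (Y - C))^2)}"
      using \<open>P Xopt\<close> by simp
  qed
qed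

lemma half_sq_dist_argmin_image_eq:
  fixes Xopt C :: "'a::real_inner"
  assumes "Xopt = f Gopt" and "\<And>G. (Xopt - C) \<bullet> (f G - Xopt) = 0"
  shows "{X. \<exists>G. X = f G \<and>
      (\<forall>Y G'. Y = f G' \<longrightarrow> (1/2) * (norm (X - C))^2 \<le> (1/2) * (norm (Y - C))^2)} = {Xopt}"
proof -
  have "(\<exists>G. Xopt = f G)"
    using assms(1) by blast
  then have "{X. (\<exists>G. X = f G) \<and>
      (\<forall>Y. (\<exists>G. Y = f G) \<longrightarrow> (1/2) * (norm (X - C))^2 \<le> (1/2) * (norm (Y - C))^2)} = {Xopt}"
    by (rule half_sq_dist_argmin_eq) (use assms(2) in blast)
  then show ?thesis
    by blast
qed

lemma argmin_constraint_eq: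
  fixes M :: "real^'k^'n" and B C Xopt :: "real^'m^'n"
  assumes P: "\<And>Y. P Y \<longleftrightarrow> transpose M ** Y = transpose M ** B"
    and Xopt: "transpose M ** Xopt = transpose M ** B" and \<Gamma>opt: "Xopt = C + M ** \<Gamma>opt"
  shows "{X. P X \<and> (\<forall>Y. P Y \<longrightarrow> (1/2) * (norm (X - C))^2 \<le> (1/2) * (norm (Y - C))^2)}
    = {Xopt}"
proof (rule half_sq_dist_argmin_eq)
  show "P Xopt"
    using P Xopt by simp
  fix Y
  assume "P Y"
  have "(Xopt - C) \<bullet> (Y - Xopt) = (M ** \<Gamma>opt) \<bullet> (Y - Xopt)"
    using \<Gamma>opt by simp
  also have "\<dots> = \<Gamma>opt \<bullet> (transpose M ** Y - transpose M ** Xopt)"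
    by (simp add: inner_matrix_mult_transpose matrix_diff_ldistrib)
  also have "\<dots> = 0"
    using P \<open>P Y\<close> Xopt by simp
  finally show "(Xopt - C) \<bullet> (Y - Xopt) = 0" .
qed

lemma argmin_range_eq:
  fixes M :: "real^'k^'n" and B C Xopt :: "real^'m^'n"
  assumes Xopt: "transpose M ** Xopt = transpose M ** B" and \<Gamma>opt: "Xopt = C + M ** \<Gamma>opt"
  shows "{X. \<exists>\<Gamma>. X = C + M ** \<Gamma> \<and>
      (\<forall>Y \<Gamma>'. Y = C + M ** \<Gamma>' \<longrightarrow> (1/2) * (norm (X - B))^2 \<le> (1/2) * (norm (Y - B))^2)}
    = {Xopt}"
proof (rule half_sq_dist_argmin_image_eq)
  show "Xopt = C + M ** \<Gamma>opt"
    by (rule \<Gamma>opt)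
  fix \<Gamma>
  have "(Xopt - B) \<bullet> (C + M ** \<Gamma> - Xopt) = (M ** (\<Gamma> - \<Gamma>opt)) \<bullet> (Xopt - B)"
    using \<Gamma>opt by (simp add: inner_commute matrix_diff_ldistrib)
  also have "\<dots> = (\<Gamma> - \<Gamma>opt) \<bullet> (transpose M ** (Xopt - B))"
    by (rule inner_matrix_mult_transpose)
  also have "\<dots> = 0"
    using Xopt by (simp add: matrix_diff_ldistrib)
  finally show "(Xopt - B) \<bullet> (C + M ** \<Gamma> - Xopt) = 0" .
qed

lemma pinv_least_norm_solution:
  fixes A :: "real^'n^'m"
  shows "{X. transpose A = transpose A ** A ** X \<and>
      (\<forall>Y. transpose A = transpose A ** A ** Y \<longrightarrow> (1/2) * (norm X)^2 \<le> (1/2) * (norm Y)^2)}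
    = {pinv A}"
proof -
  let ?M = "transpose A ** A"
  have M_sym: "transpose ?M = ?M"
    by (simp add: matrix_transpose_mul)
  have constraint: "transpose A = ?M ** Y \<longleftrightarrow> transpose ?M ** Y = transpose ?M ** pinv A" for Y
    using pinv_normal_equation[of A] M_sym by auto
  obtain G where "pinv A = 0 + ?M ** G"
    using pinv_in_range_gram[of A] by auto
  from argmin_constraint_eq[OF constraint refl this] show ?thesis
    by simp
qed

lemma pinv_nearest_in_range_gram:
  fixes A :: "real^'n^'m"
  shows "{X. \<exists>\<Gamma> :: real^'m^'n. X = transpose A ** A ** \<Gamma> \<and>
      (\<forall>Y \<Gamma>'. Y = transpose A ** A ** \<Gamma>' \<longrightarrow>
        (1/2) * (norm (X - pinv A))^2 \<le> (1/2) * (norm (Y - pinv A))^2)}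
    = {pinv A}"
proof -
  obtain G where "pinv A = 0 + transpose A ** A ** G"
    using pinv_in_range_gram[of A] by auto
  from argmin_range_eq[OF refl this] show ?thesis
    by simp
qed

lemma sketched_update_least_change:
  fixes A :: "real^'n^'m" and S :: "real^'t^'n" and Xk :: "real^'m^'n"
  shows "{X. transpose S ** transpose A = transpose S ** transpose A ** A ** X \<and>
      (\<forall>Y. transpose S ** transpose A = transpose S ** transpose A ** A ** Y \<longrightarrow>
        (1/2) * (norm (X - Xk))^2 \<le> (1/2) * (norm (Y - Xk))^2)}
    = {Xk - transpose A ** A ** S **
        pinv (transpose S ** transpose A ** A ** transpose A ** A ** S) **
        transpose S ** transpose A ** (A ** Xk - mat 1)}" (is ?least_change)
    and "{X. \<exists>\<Gamma> :: real^'m^'t. X = Xk + transpose A ** A ** S ** \<Gamma> \<and>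
      (\<forall>Y \<Gamma>'. Y = Xk + transpose A ** A ** S ** \<Gamma>' \<longrightarrow>
        (1/2) * (norm (X - pinv A))^2 \<le> (1/2) * (norm (Y - pinv A))^2)}
    = {Xk - transpose A ** A ** S **
        pinv (transpose S ** transpose A ** A ** transpose A ** A ** S) **
        transpose S ** transpose A ** (A ** Xk - mat 1)}" (is ?nearest)
proof -
  define M where "M = transpose A ** A ** S"
  define K where "K = pinv (transpose M ** M)"
  define \<Gamma> where "\<Gamma> = K ** transpose M ** (pinv A - Xk)"
  have M_T: "transpose M = transpose S ** transpose A ** A"
    by (simp add: M_def matrix_transpose_mul matrix_mul_assoc)
  have residual: "transpose S ** transpose A ** (A ** Xk - mat 1) = transpose M ** (Xk - pinv A)"
    using pinv_normal_equation[of A]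
    by (simp add: M_T matrix_diff_ldistrib matrix_mul_assoc[symmetric])
  have gram: "transpose S ** transpose A ** A ** transpose A ** A ** S = transpose M ** M"
    unfolding M_T by (simp add: M_def matrix_mul_assoc)
  have "transpose A ** A ** S ** pinv (transpose S ** transpose A ** A ** transpose A ** A ** S) **
        transpose S ** transpose A ** (A ** Xk - mat 1)
      = M ** K ** (transpose S ** transpose A ** (A ** Xk - mat 1))"
    unfolding gram by (simp add: M_def K_def matrix_mul_assoc)
  also have "\<dots> = - (M ** \<Gamma>)"
    unfolding residual \<Gamma>_def by (simp add: matrix_diff_ldistrib matrix_mul_assoc)
  finally have update: "Xk - transpose A ** A ** S **
        pinv (transpose S ** transpose A ** A ** transpose A ** A ** S) **
        transpose S ** transpose A ** (A ** Xk - mat 1) = Xk + M ** \<Gamma>"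
    by simp
  have constraint: "transpose S ** transpose A = transpose S ** transpose A ** A ** Y
      \<longleftrightarrow> transpose M ** Y = transpose M ** pinv A" for Y
    using pinv_normal_equation[of A] by (auto simp: M_T matrix_mul_assoc[symmetric])
  have solves: "transpose M ** (Xk + M ** \<Gamma>) = transpose M ** pinv A"
    unfolding \<Gamma>_def K_def by (rule gram_projection_solves_constraint)
  show ?least_change
    unfolding update by (rule argmin_constraint_eq[OF constraint solves refl])
  show ?nearest
    using argmin_range_eq[OF solves refl] unfolding update by (simp only: M_def)
qed

theorem theorem1:
  fixes A :: "real^'n^'m" and Xk :: "real^'m^'n" and S :: "real^'t^'n"
  shows
   "{X :: real^'m^'n. transpose A = transpose A ** A ** X \<and>
        (\<forall>Y. transpose A = transpose A ** A ** Y \<longrightarrow>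
              (1/2) * (frob_norm X)^2 \<le> (1/2) * (frob_norm Y)^2)}
    = {X. \<exists>\<Gamma> :: real^'m^'n. X = transpose A ** A ** \<Gamma> \<and>
        (\<forall>Y (\<Gamma>' :: real^'m^'n). Y = transpose A ** A ** \<Gamma>' \<longrightarrow>
              (1/2) * (frob_norm (X - pinv A))^2 \<le> (1/2) * (frob_norm (Y - pinv A))^2)}
    \<and>
    {X :: real^'m^'n. transpose S ** transpose A = transpose S ** transpose A ** A ** X \<and>
        (\<forall>Y. transpose S ** transpose A = transpose S ** transpose A ** A ** Y \<longrightarrow>
              (1/2) * (frob_norm (X - Xk))^2 \<le> (1/2) * (frob_norm (Y - Xk))^2)}
    = {X. \<exists>\<Gamma> :: real^'m^'t. X = Xk + transpose A ** A ** S ** \<Gamma> \<and>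
        (\<forall>Y (\<Gamma>' :: real^'m^'t). Y = Xk + transpose A ** A ** S ** \<Gamma>' \<longrightarrow>
              (1/2) * (frob_norm (X - pinv A))^2 \<le> (1/2) * (frob_norm (Y - pinv A))^2)}
    \<and>
    {X :: real^'m^'n. transpose S ** transpose A = transpose S ** transpose A ** A ** X \<and>
        (\<forall>Y. transpose S ** transpose A = transpose S ** transpose A ** A ** Y \<longrightarrow>
              (1/2) * (frob_norm (X - Xk))^2 \<le> (1/2) * (frob_norm (Y - Xk))^2)}
    = {Xk - transpose A ** A ** S **
             pinv (transpose S ** transpose A ** A ** transpose A ** A ** S) **
             transpose S ** transpose A ** (A ** Xk - mat 1)}"
  unfolding frob_norm_eq_norm
  using pinv_least_norm_solution[of A] pinv_nearest_in_range_gram[of A]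
    sketched_update_least_change[where A = A and S = S and Xk = Xk]
  by simp

end
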